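(* Let $n>1$ be an integer and $D_n=\{f\in C([0,1];M_n): f(0)\text{ and }f(1)\text{ are scalar matrices}\}$. Then $TC(D_n)=\infty$.
   Context: All tensor products are minimal. For a unital $C^*$-algebra $A$ let $p_0,p_1:A\to A\otimes A$ be $p_0(a)=a\otimes 1$, $p_1(a)=1\otimes a$, and for $t\in[0,1]$ and a $C^*$-algebra $B$ let $\mathrm{ev}_t:B\otimes C[0,1]\to B$ be evaluation at $t$. The topological complexity $TC(A)$ is the minimal number $n$ such that there exist $C^*$-algebras $B_1,\dots,B_n$ with surjective $*$-homomorphisms $q_i:A\otimes A\to B_i$ satisfying $\bigcap_{i=1}^n\ker q_i=\{0\}$, together with $*$-homomorphisms $\sigma_i:A\to B_i\otimes C[0,1]$ such that $\mathrm{ev}_k\circ\sigma_i=q_i\circ p_k$ for $k=0,1$ and all $i$; $TC(A)=\infty$ if no such $n$ exists. *)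

theory Defs
  imports "HOL-Analysis.Analysis"
begin

record 'a cstar =
  cs_carrier :: "'a set"
  cs_zero :: 'a
  cs_add :: "'a \<Rightarrow> 'a \<Rightarrow> 'a"
  cs_smult :: "complex \<Rightarrow> 'a \<Rightarrow> 'a"
  cs_mult :: "'a \<Rightarrow> 'a \<Rightarrow> 'a"
  cs_star :: "'a \<Rightarrow> 'a"
  cs_norm :: "'a \<Rightarrow> real"

definition cs_sub :: "'a cstar \<Rightarrow> 'a \<Rightarrow> 'a \<Rightarrow> 'a" where
  "cs_sub A x y = cs_add A x (cs_smult A (-1) y)"

definition is_cstar_algebra :: "'a cstar \<Rightarrow> bool" where
  "is_cstar_algebra A \<longleftrightarrow>
     (let C = cs_carrier A; z = cs_zero A; add = cs_add A; sm = cs_smult A;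
          mul = cs_mult A; st = cs_star A; nr = cs_norm A in
     \<comment> \<open>closure\<close>
     z \<in> C \<and>
     (\<forall>x\<in>C. \<forall>y\<in>C. add x y \<in> C \<and> mul x y \<in> C) \<and>
     (\<forall>c. \<forall>x\<in>C. sm c x \<in> C) \<and>
     (\<forall>x\<in>C. st x \<in> C) \<and>
     \<comment> \<open>complex vector space\<close>
     (\<forall>x\<in>C. \<forall>y\<in>C. \<forall>w\<in>C. add (add x y) w = add x (add y w)) \<and>
     (\<forall>x\<in>C. \<forall>y\<in>C. add x y = add y x) \<and>
     (\<forall>x\<in>C. add z x = x) \<and>
     (\<forall>x\<in>C. \<exists>y\<in>C. add x y = z) \<and>
     (\<forall>x\<in>C. sm 1 x = x) \<and>
     (\<forall>a b. \<forall>x\<in>C. sm (a * b) x = sm a (sm b x)) \<and>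
     (\<forall>a. \<forall>x\<in>C. \<forall>y\<in>C. sm a (add x y) = add (sm a x) (sm a y)) \<and>
     (\<forall>a b. \<forall>x\<in>C. sm (a + b) x = add (sm a x) (sm b x)) \<and>
     \<comment> \<open>algebra\<close>
     (\<forall>x\<in>C. \<forall>y\<in>C. \<forall>w\<in>C. mul (mul x y) w = mul x (mul y w)) \<and>
     (\<forall>x\<in>C. \<forall>y\<in>C. \<forall>w\<in>C. mul x (add y w) = add (mul x y) (mul x w)) \<and>
     (\<forall>x\<in>C. \<forall>y\<in>C. \<forall>w\<in>C. mul (add x y) w = add (mul x w) (mul y w)) \<and>
     (\<forall>a. \<forall>x\<in>C. \<forall>y\<in>C. sm a (mul x y) = mul (sm a x) y \<and> sm a (mul x y) = mul x (sm a y)) \<and>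
     \<comment> \<open>involution\<close>
     (\<forall>x\<in>C. st (st x) = x) \<and>
     (\<forall>x\<in>C. \<forall>y\<in>C. st (add x y) = add (st x) (st y)) \<and>
     (\<forall>a. \<forall>x\<in>C. st (sm a x) = sm (cnj a) (st x)) \<and>
     (\<forall>x\<in>C. \<forall>y\<in>C. st (mul x y) = mul (st y) (st x)) \<and>
     \<comment> \<open>norm\<close>
     (\<forall>x\<in>C. 0 \<le> nr x \<and> (nr x = 0 \<longleftrightarrow> x = z)) \<and>
     (\<forall>x\<in>C. \<forall>y\<in>C. nr (add x y) \<le> nr x + nr y) \<and>
     (\<forall>a. \<forall>x\<in>C. nr (sm a x) = cmod a * nr x) \<and>
     (\<forall>x\<in>C. \<forall>y\<in>C. nr (mul x y) \<le> nr x * nr y) \<and>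
     (\<forall>x\<in>C. nr (mul (st x) x) = (nr x)\<^sup>2) \<and>
     \<comment> \<open>completeness\<close>
     (\<forall>X::nat \<Rightarrow> 'a. (\<forall>k. X k \<in> C) \<longrightarrow>
        (\<forall>e>0. \<exists>N. \<forall>k\<ge>N. \<forall>l\<ge>N. nr (cs_sub A (X k) (X l)) < e) \<longrightarrow>
        (\<exists>L\<in>C. \<forall>e>0. \<exists>N. \<forall>k\<ge>N. nr (cs_sub A (X k) L) < e)))"

definition is_star_hom :: "'a cstar \<Rightarrow> 'b cstar \<Rightarrow> ('a \<Rightarrow> 'b) \<Rightarrow> bool" where
  "is_star_hom A B f \<longleftrightarrow>
     (\<forall>x\<in>cs_carrier A. f x \<in> cs_carrier B) \<and>
     (\<forall>x\<in>cs_carrier A. \<forall>y\<in>cs_carrier A. f (cs_add A x y) = cs_add B (f x) (f y)) \<and>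
     (\<forall>c. \<forall>x\<in>cs_carrier A. f (cs_smult A c x) = cs_smult B c (f x)) \<and>
     (\<forall>x\<in>cs_carrier A. \<forall>y\<in>cs_carrier A. f (cs_mult A x y) = cs_mult B (f x) (f y)) \<and>
     (\<forall>x\<in>cs_carrier A. f (cs_star A x) = cs_star B (f x))"

text \<open>B \<otimes> C[0,1], realised as the C*-algebra C([0,1], B) of norm-continuous
  B-valued functions on [0,1] (extended by zero outside [0,1]); ev_t is evaluation at t.\<close>

definition path_alg :: "'b cstar \<Rightarrow> (real \<Rightarrow> 'b) cstar" where
  "path_alg B =
    \<lparr> cs_carrier = {s. (\<forall>t\<in>{0..1}. s t \<in> cs_carrier B) \<and> (\<forall>t. t \<notin> {0..1} \<longrightarrow> s t = cs_zero B) \<and>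
        (\<forall>t\<in>{0..1}. \<forall>e>0. \<exists>d>0. \<forall>u\<in>{0..1}. \<bar>u - t\<bar> < d \<longrightarrow> cs_norm B (cs_sub B (s u) (s t)) < e)},
      cs_zero = (\<lambda>_. cs_zero B),
      cs_add = (\<lambda>s r t. cs_add B (s t) (r t)),
      cs_smult = (\<lambda>c s t. cs_smult B c (s t)),
      cs_mult = (\<lambda>s r t. cs_mult B (s t) (r t)),
      cs_star = (\<lambda>s t. cs_star B (s t)),
      cs_norm = (\<lambda>s. Sup ((\<lambda>t. cs_norm B (s t)) ` {0..1})) \<rparr>"

definition mstar :: "complex^'n^'n \<Rightarrow> complex^'n^'n" where
  "mstar M = (\<chi> i j. cnj (M $ j $ i))"

definition msmult :: "complex \<Rightarrow> complex^'n^'n \<Rightarrow> complex^'n^'n" where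
  "msmult c M = (\<chi> i j. c * M $ i $ j)"

definition mnorm :: "complex^'n^'n \<Rightarrow> real" where
  "mnorm M = onorm (\<lambda>x. M *v x)"

text \<open>Kronecker product: M_n \<otimes> M_n = M_{n^2} (spatial tensor product).\<close>
definition kron :: "complex^'n^'n \<Rightarrow> complex^'n^'n \<Rightarrow> complex^('n::finite\<times>'n)^('n\<times>'n)" where
  "kron A B = (\<chi> p q. A $ fst p $ fst q * B $ snd p $ snd q)"

definition mfun_alg :: "'x set \<Rightarrow> ('x \<Rightarrow> complex^'m^'m) set \<Rightarrow> ('x \<Rightarrow> complex^'m^'m) cstar" where
  "mfun_alg X S =
    \<lparr> cs_carrier = S,
      cs_zero = (\<lambda>_. 0),
      cs_add = (\<lambda>f g x. f x + g x),
      cs_smult = (\<lambda>c f x. msmult c (f x)),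
      cs_mult = (\<lambda>f g x. f x ** g x),
      cs_star = (\<lambda>f x. mstar (f x)),
      cs_norm = (\<lambda>f. Sup ((\<lambda>x. mnorm (f x)) ` X)) \<rparr>"

definition Dn_set :: "(real \<Rightarrow> complex^'n^'n) set" where
  "Dn_set = {f. continuous_on {0..1} f \<and> (\<forall>t. t \<notin> {0..1} \<longrightarrow> f t = 0) \<and>
                (\<exists>c. f 0 = mat c) \<and> (\<exists>c. f 1 = mat c)}"

definition Dn :: "(real \<Rightarrow> complex^'n^'n) cstar" where
  "Dn = mfun_alg {0..1} Dn_set"

abbreviation unit_square :: "(real \<times> real) set" where
  "unit_square \<equiv> {0..1} \<times> {0..1}"

text \<open>D_n \<otimes> D_n (minimal tensor product) realised inside C([0,1]^2, M_n \<otimes> M_n):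
  the uniform closure of the span of the elementary tensors (s,t) \<mapsto> f(s) \<otimes> g(t).\<close>
definition DnDn_set :: "(real \<times> real \<Rightarrow> complex^('n::finite\<times>'n)^('n\<times>'n)) set" where
  "DnDn_set = {F. (\<forall>p. p \<notin> unit_square \<longrightarrow> F p = 0) \<and>
      (\<forall>e>0. \<exists>(k::nat) (fs :: nat \<Rightarrow> real \<Rightarrow> complex^'n^'n) gs.
          (\<forall>i<k. fs i \<in> Dn_set \<and> gs i \<in> Dn_set) \<and>
          (\<forall>p\<in>unit_square. mnorm (F p - (\<Sum>i<k. kron (fs i (fst p)) (gs i (snd p)))) < e))}"

definition DnDn :: "(real \<times> real \<Rightarrow> complex^('n::finite\<times>'n)^('n\<times>'n)) cstar" where
  "DnDn = mfun_alg unit_square DnDn_set"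

definition p0 :: "(real \<Rightarrow> complex^'n^'n) \<Rightarrow> real \<times> real \<Rightarrow> complex^('n::finite\<times>'n)^('n\<times>'n)" where
  "p0 a = (\<lambda>p. if p \<in> unit_square then kron (a (fst p)) (mat 1) else 0)"

definition p1 :: "(real \<Rightarrow> complex^'n^'n) \<Rightarrow> real \<times> real \<Rightarrow> complex^('n::finite\<times>'n)^('n\<times>'n)" where
  "p1 a = (\<lambda>p. if p \<in> unit_square then kron (mat 1) (a (snd p)) else 0)"

text \<open>Data witnessing TC(A) \<le> m, given A, A \<otimes> A and p_0, p_1.\<close>
definition TC_data ::
  "'a cstar \<Rightarrow> 'aa cstar \<Rightarrow> ('a \<Rightarrow> 'aa) \<Rightarrow> ('a \<Rightarrow> 'aa) \<Rightarrow> nat \<Rightarrow>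
   (nat \<Rightarrow> 'b cstar) \<Rightarrow> (nat \<Rightarrow> 'aa \<Rightarrow> 'b) \<Rightarrow> (nat \<Rightarrow> 'a \<Rightarrow> real \<Rightarrow> 'b) \<Rightarrow> bool" where
  "TC_data A AA q0 q1 m B q \<sigma> \<longleftrightarrow>
     (\<forall>i<m. is_cstar_algebra (B i) \<and>
            is_star_hom AA (B i) (q i) \<and> q i ` cs_carrier AA = cs_carrier (B i) \<and>
            is_star_hom A (path_alg (B i)) (\<sigma> i) \<and>
            (\<forall>a\<in>cs_carrier A. \<sigma> i a 0 = q i (q0 a) \<and> \<sigma> i a 1 = q i (q1 a))) \<and>
     (\<forall>x\<in>cs_carrier AA. (\<forall>i<m. q i x = cs_zero (B i)) \<longrightarrow> x = cs_zero AA)"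

end

theory Submission
  imports Defs
begin

text \<open>Every element of \<open>D\<^sub>n \<otimes> D\<^sub>n\<close> takes a diagonal value at the corner \<open>(0, 1)\<close> of the unit
  square, because elementary tensors \<open>f(s) \<otimes> g(t)\<close> are products of scalar matrices there. So a
  diagonal entry \<open>\<theta>\<close> of the corner value is a character of \<open>D\<^sub>n \<otimes> D\<^sub>n\<close>, with
  \<open>\<theta>(p\<^sub>0 a) = a(0)\<close> and \<open>\<theta>(p\<^sub>1 a) = a(1)\<close> read as scalars. A character kernel is prime, so if the
  kernels of the \<open>q\<^sub>i\<close> intersect trivially, one of them lies in \<open>ker \<theta>\<close> and \<open>\<theta>\<close> factors through
  \<open>q\<^sub>i\<close> as a character \<open>\<psi>\<close> of \<open>B\<^sub>i\<close>. Characters of Banach algebras are contractive, hence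
  \<open>t \<mapsto> \<psi>(\<sigma>\<^sub>i(h)(t))\<close> is continuous for the ramp \<open>h(t) = t\<cdot>1\<close>. But every character of \<open>D\<^sub>n\<close>
  (\<open>n > 1\<close>) maps \<open>h\<close> to \<open>0\<close> or \<open>1\<close>: \<open>h - h\<^sup>2\<close> is a sum of products of square-zero elements
  \<open>\<surd>(t(1 - t)) e\<^sub>i\<^sub>j\<close>. A continuous \<open>{0, 1}\<close>-valued path is constant, contradicting
  \<open>\<psi>(\<sigma>\<^sub>i(h)(0)) = h(0) = 0\<close> and \<open>\<psi>(\<sigma>\<^sub>i(h)(1)) = 1\<close>.\<close>

section \<open>Banach algebras and their characters\<close>

locale banach_algebra =
  fixes A :: "'a cstar"
  assumes zero_closed: "cs_zero A \<in> cs_carrier A"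
    and add_closed: "\<And>x y. x \<in> cs_carrier A \<Longrightarrow> y \<in> cs_carrier A \<Longrightarrow> cs_add A x y \<in> cs_carrier A"
    and mult_closed: "\<And>x y. x \<in> cs_carrier A \<Longrightarrow> y \<in> cs_carrier A \<Longrightarrow> cs_mult A x y \<in> cs_carrier A"
    and smult_closed: "\<And>c x. x \<in> cs_carrier A \<Longrightarrow> cs_smult A c x \<in> cs_carrier A"
    and add_assoc: "\<And>x y z. x \<in> cs_carrier A \<Longrightarrow> y \<in> cs_carrier A \<Longrightarrow> z \<in> cs_carrier A \<Longrightarrow>
      cs_add A (cs_add A x y) z = cs_add A x (cs_add A y z)"
    and add_commute: "\<And>x y. x \<in> cs_carrier A \<Longrightarrow> y \<in> cs_carrier A \<Longrightarrow> cs_add A x y = cs_add A y x"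
    and zero_add: "\<And>x. x \<in> cs_carrier A \<Longrightarrow> cs_add A (cs_zero A) x = x"
    and add_inverse: "\<And>x. x \<in> cs_carrier A \<Longrightarrow> \<exists>y\<in>cs_carrier A. cs_add A x y = cs_zero A"
    and smult_one: "\<And>x. x \<in> cs_carrier A \<Longrightarrow> cs_smult A 1 x = x"
    and smult_smult: "\<And>a b x. x \<in> cs_carrier A \<Longrightarrow> cs_smult A (a * b) x = cs_smult A a (cs_smult A b x)"
    and smult_add_right: "\<And>a x y. x \<in> cs_carrier A \<Longrightarrow> y \<in> cs_carrier A \<Longrightarrow>
      cs_smult A a (cs_add A x y) = cs_add A (cs_smult A a x) (cs_smult A a y)"
    and smult_add_left: "\<And>a b x. x \<in> cs_carrier A \<Longrightarrow>
      cs_smult A (a + b) x = cs_add A (cs_smult A a x) (cs_smult A b x)"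
    and mult_add_right: "\<And>x y z. x \<in> cs_carrier A \<Longrightarrow> y \<in> cs_carrier A \<Longrightarrow> z \<in> cs_carrier A \<Longrightarrow>
      cs_mult A x (cs_add A y z) = cs_add A (cs_mult A x y) (cs_mult A x z)"
    and mult_add_left: "\<And>x y z. x \<in> cs_carrier A \<Longrightarrow> y \<in> cs_carrier A \<Longrightarrow> z \<in> cs_carrier A \<Longrightarrow>
      cs_mult A (cs_add A x y) z = cs_add A (cs_mult A x z) (cs_mult A y z)"
    and smult_mult_right: "\<And>a x y. x \<in> cs_carrier A \<Longrightarrow> y \<in> cs_carrier A \<Longrightarrow>
      cs_smult A a (cs_mult A x y) = cs_mult A x (cs_smult A a y)"
    and norm_nonneg: "\<And>x. x \<in> cs_carrier A \<Longrightarrow> 0 \<le> cs_norm A x"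
    and norm_eq_zero: "\<And>x. x \<in> cs_carrier A \<Longrightarrow> cs_norm A x = 0 \<longleftrightarrow> x = cs_zero A"
    and norm_triangle: "\<And>x y. x \<in> cs_carrier A \<Longrightarrow> y \<in> cs_carrier A \<Longrightarrow>
      cs_norm A (cs_add A x y) \<le> cs_norm A x + cs_norm A y"
    and norm_smult: "\<And>a x. x \<in> cs_carrier A \<Longrightarrow> cs_norm A (cs_smult A a x) = cmod a * cs_norm A x"
    and norm_mult: "\<And>x y. x \<in> cs_carrier A \<Longrightarrow> y \<in> cs_carrier A \<Longrightarrow>
      cs_norm A (cs_mult A x y) \<le> cs_norm A x * cs_norm A y"
    and complete: "\<And>X :: nat \<Rightarrow> 'a. (\<And>k. X k \<in> cs_carrier A) \<Longrightarrow>
      (\<forall>e>0. \<exists>N. \<forall>k\<ge>N. \<forall>l\<ge>N. cs_norm A (cs_sub A (X k) (X l)) < e) \<Longrightarrow>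
      \<exists>L\<in>cs_carrier A. \<forall>e>0. \<exists>N. \<forall>k\<ge>N. cs_norm A (cs_sub A (X k) L) < e"

lemma cstar_algebra_imp_banach_algebra:
  assumes "is_cstar_algebra A"
  shows "banach_algebra A"
proof -
  note ax = assms[unfolded is_cstar_algebra_def Let_def]
  have smult_mult: "cs_smult A a (cs_mult A x y) = cs_mult A x (cs_smult A a y)"
    if "x \<in> cs_carrier A" "y \<in> cs_carrier A" for a x y
    using ax that by (elim conjE) metis
  show ?thesis
    by (unfold_locales; insert ax; elim conjE; (simp; fail)?) (rule smult_mult)
qed

text \<open>The zero functional counts as a character here.\<close>

definition is_character :: "'a cstar \<Rightarrow> ('a \<Rightarrow> complex) \<Rightarrow> bool" where
  "is_character A \<phi> \<longleftrightarrow>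
     (\<forall>x\<in>cs_carrier A. \<forall>y\<in>cs_carrier A.
        \<phi> (cs_add A x y) = \<phi> x + \<phi> y \<and> \<phi> (cs_mult A x y) = \<phi> x * \<phi> y) \<and>
     (\<forall>c. \<forall>x\<in>cs_carrier A. \<phi> (cs_smult A c x) = c * \<phi> x)"

context banach_algebra
begin

abbreviation ba_add (infixl "\<oplus>" 65) where "x \<oplus> y \<equiv> cs_add A x y"
abbreviation ba_mult (infixl "\<otimes>" 70) where "x \<otimes> y \<equiv> cs_mult A x y"
abbreviation ba_smult (infixr "\<odot>" 75) where "c \<odot> x \<equiv> cs_smult A c x"
abbreviation ba_sub (infixl "\<ominus>" 65) where "x \<ominus> y \<equiv> cs_sub A x y"

lemma add_zero: "x \<in> cs_carrier A \<Longrightarrow> x \<oplus> cs_zero A = x"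
  using add_commute zero_add zero_closed by simp

lemma add_left_cancel:
  assumes a: "a \<in> cs_carrier A" and b: "b \<in> cs_carrier A" and c: "c \<in> cs_carrier A"
    and eq: "a \<oplus> b = a \<oplus> c"
  shows "b = c"
proof -
  obtain a' where a': "a' \<in> cs_carrier A" "a \<oplus> a' = cs_zero A"
    using add_inverse a by blast
  then have a'a: "a' \<oplus> a = cs_zero A"
    using add_commute a by simp
  have "b = (a' \<oplus> a) \<oplus> b"
    using a'a zero_add b by simp
  also have "\<dots> = a' \<oplus> (a \<oplus> c)"
    using add_assoc a'(1) a b eq by simp
  also have "\<dots> = c"
    using add_assoc[OF a'(1) a c] a'a zero_add c by simp
  finally show ?thesis .
qed

lemma smult_zero:
  assumes x: "x \<in> cs_carrier A"
  shows "0 \<odot> x = cs_zero A"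
proof -
  have "0 \<odot> x \<oplus> 0 \<odot> x = 0 \<odot> x \<oplus> cs_zero A"
    using smult_add_left[OF x, of 0 0] add_zero smult_closed x by simp
  then show ?thesis
    using add_left_cancel smult_closed x zero_closed by blast
qed

lemma mult_zero_right:
  assumes x: "x \<in> cs_carrier A"
  shows "x \<otimes> cs_zero A = cs_zero A"
proof -
  have "x \<otimes> cs_zero A \<oplus> x \<otimes> cs_zero A = x \<otimes> cs_zero A \<oplus> cs_zero A"
    using mult_add_right[OF x zero_closed zero_closed] zero_add zero_closed add_zero mult_closed x
    by simp
  then show ?thesis
    using add_left_cancel mult_closed x zero_closed by blast
qed

lemma mult_zero_left:
  assumes x: "x \<in> cs_carrier A"
  shows "cs_zero A \<otimes> x = cs_zero A"
proof -
  have "cs_zero A \<otimes> x \<oplus> cs_zero A \<otimes> x = cs_zero A \<otimes> x \<oplus> cs_zero A"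
    using mult_add_left[OF zero_closed zero_closed x] zero_add zero_closed add_zero mult_closed x
    by simp
  then show ?thesis
    using add_left_cancel mult_closed x zero_closed by blast
qed

lemma sub_self: "x \<in> cs_carrier A \<Longrightarrow> x \<ominus> x = cs_zero A"
  unfolding cs_sub_def using smult_add_left[of x 1 "-1"] by (simp add: smult_one smult_zero)

lemma neg_add_self: "x \<in> cs_carrier A \<Longrightarrow> (-1) \<odot> x \<oplus> x = cs_zero A"
  using sub_self add_commute smult_closed by (simp add: cs_sub_def)

lemma sub_closed: "x \<in> cs_carrier A \<Longrightarrow> y \<in> cs_carrier A \<Longrightarrow> x \<ominus> y \<in> cs_carrier A"
  unfolding cs_sub_def by (simp add: add_closed smult_closed)

lemma sub_add_sub:
  assumes a: "a \<in> cs_carrier A" and b: "b \<in> cs_carrier A" and c: "c \<in> cs_carrier A"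
  shows "(a \<ominus> b) \<oplus> (b \<ominus> c) = a \<ominus> c"
proof -
  have nb: "(-1) \<odot> b \<in> cs_carrier A" and nc: "(-1) \<odot> c \<in> cs_carrier A"
    using smult_closed b c by blast+
  have "(a \<ominus> b) \<oplus> (b \<ominus> c) = a \<oplus> (((-1) \<odot> b \<oplus> b) \<oplus> (-1) \<odot> c)"
    unfolding cs_sub_def using add_assoc add_closed a b nb nc by simp
  then show ?thesis
    unfolding cs_sub_def using neg_add_self[OF b] zero_add[OF nc] by simp
qed

lemma sub_add_cancel:
  assumes a: "a \<in> cs_carrier A" and b: "b \<in> cs_carrier A"
  shows "(a \<ominus> b) \<oplus> b = a"
proof -
  have "(a \<ominus> b) \<oplus> b = a \<oplus> ((-1) \<odot> b \<oplus> b)"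
    unfolding cs_sub_def using add_assoc smult_closed a b by simp
  then show ?thesis
    using neg_add_self[OF b] add_zero[OF a] by simp
qed

lemma sub_eq_zero_imp_eq:
  assumes "a \<in> cs_carrier A" "b \<in> cs_carrier A" "a \<ominus> b = cs_zero A"
  shows "a = b"
  using sub_add_cancel[OF assms(1,2)] assms(2,3) zero_add by simp

lemma norm_sub_triangle:
  assumes "a \<in> cs_carrier A" "b \<in> cs_carrier A" "c \<in> cs_carrier A"
  shows "cs_norm A (a \<ominus> c) \<le> cs_norm A (a \<ominus> b) + cs_norm A (b \<ominus> c)"
  using norm_triangle[OF sub_closed sub_closed] sub_add_sub assms by metis

lemma norm_sub_commute:
  assumes a: "a \<in> cs_carrier A" and b: "b \<in> cs_carrier A"
  shows "cs_norm A (b \<ominus> a) = cs_norm A (a \<ominus> b)"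
proof -
  have "(-1) \<odot> (a \<ominus> b) = (-1) \<odot> a \<oplus> b"
    unfolding cs_sub_def using smult_add_right smult_smult[of b "-1" "-1"] smult_one smult_closed a b
    by simp
  also have "\<dots> = b \<ominus> a"
    unfolding cs_sub_def using add_commute smult_closed a b by simp
  finally show ?thesis
    using norm_smult[OF sub_closed[OF a b], of "-1"] by simp
qed

lemma mult_sub_right:
  assumes "x \<in> cs_carrier A" "a \<in> cs_carrier A" "b \<in> cs_carrier A"
  shows "x \<otimes> (a \<ominus> b) = x \<otimes> a \<ominus> x \<otimes> b"
  unfolding cs_sub_def using assms mult_add_right smult_mult_right smult_closed by simp

lemma add_sub_add_left:
  assumes x: "x \<in> cs_carrier A" and u: "u \<in> cs_carrier A" and v: "v \<in> cs_carrier A"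
  shows "(x \<oplus> u) \<ominus> (x \<oplus> v) = u \<ominus> v"
proof -
  have nx: "(-1) \<odot> x \<in> cs_carrier A" and nv: "(-1) \<odot> v \<in> cs_carrier A"
    using smult_closed x v by blast+
  have "(x \<oplus> u) \<ominus> (x \<oplus> v) = (u \<oplus> x) \<oplus> ((-1) \<odot> x \<oplus> (-1) \<odot> v)"
    unfolding cs_sub_def using smult_add_right[OF x v] add_commute[OF x u] by simp
  also have "\<dots> = u \<oplus> ((x \<oplus> (-1) \<odot> x) \<oplus> (-1) \<odot> v)"
    using add_assoc add_closed x u nx nv by simp
  also have "\<dots> = u \<ominus> v"
    using sub_self[OF x] zero_add[OF nv] by (simp add: cs_sub_def)
  finally show ?thesis .
qed

lemma norm_sub_geometric_tail:
  assumes T: "\<And>n. T n \<in> cs_carrier A"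
    and step: "\<And>n. cs_norm A (T (Suc n) \<ominus> T n) \<le> D * r ^ n"
    and r: "0 \<le> r" "r < 1"
    and "l \<le> k"
  shows "cs_norm A (T k \<ominus> T l) \<le> D * r ^ l / (1 - r)"
proof -
  have D: "0 \<le> D"
    using step[of 0] norm_nonneg[OF sub_closed[OF T T]] by (metis order_trans power_0 mult_1_right)
  have partial: "cs_norm A (T (l + d) \<ominus> T l) \<le> D * r ^ l * (\<Sum>j<d. r ^ j)" for d
  proof (induction d)
    case 0
    show ?case using sub_self[OF T, of l] norm_eq_zero[OF zero_closed] by simp
  next
    case (Suc d)
    have "cs_norm A (T (l + Suc d) \<ominus> T l)
        \<le> cs_norm A (T (Suc (l + d)) \<ominus> T (l + d)) + cs_norm A (T (l + d) \<ominus> T l)"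
      using norm_sub_triangle[OF T T T] by simp
    also have "\<dots> \<le> D * r ^ (l + d) + D * r ^ l * (\<Sum>j<d. r ^ j)"
      using step Suc.IH by (rule add_mono)
    also have "\<dots> = D * r ^ l * (\<Sum>j<Suc d. r ^ j)"
      by (simp add: power_add algebra_simps)
    finally show ?case .
  qed
  have "(\<Sum>j<k - l. r ^ j) \<le> (\<Sum>j. r ^ j)"
    using r by (intro sum_le_suminf summable_geometric) auto
  also have "\<dots> = 1 / (1 - r)"
    using r by (intro suminf_geometric) auto
  finally have "D * r ^ l * (\<Sum>j<k - l. r ^ j) \<le> D * r ^ l * (1 / (1 - r))"
    using D r by (intro mult_left_mono) auto
  then show ?thesis
    using partial[of "k - l"] \<open>l \<le> k\<close> by simp
qed

lemma cauchy_of_geometric_steps: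
  assumes T: "\<And>n. T n \<in> cs_carrier A"
    and step: "\<And>n. cs_norm A (T (Suc n) \<ominus> T n) \<le> D * r ^ n"
    and r: "0 \<le> r" "r < 1"
  shows "\<forall>e>0. \<exists>N. \<forall>k\<ge>N. \<forall>l\<ge>N. cs_norm A (T k \<ominus> T l) < e"
proof (intro allI impI)
  fix e :: real
  assume "e > 0"
  moreover have "(\<lambda>n. D / (1 - r) * r ^ n) \<longlonglongrightarrow> D / (1 - r) * 0"
    using r by (intro tendsto_mult tendsto_const LIMSEQ_power_zero) auto
  ultimately have "\<forall>\<^sub>F n in sequentially. D / (1 - r) * r ^ n < e"
    by (simp add: order_tendsto_iff)
  then obtain N where N: "D / (1 - r) * r ^ N < e"
    by (auto simp: eventually_sequentially)
  have D: "0 \<le> D"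
    using step[of 0] norm_nonneg[OF sub_closed[OF T T]] by (metis order_trans power_0 mult_1_right)
  have small: "D * r ^ l / (1 - r) < e" if "N \<le> l" for l
  proof -
    have "D * r ^ l \<le> D * r ^ N"
      using D r that by (intro mult_left_mono power_decreasing) auto
    then have "D * r ^ l / (1 - r) \<le> D * r ^ N / (1 - r)"
      using r by (intro divide_right_mono) auto
    then show ?thesis using N by simp
  qed
  note tail = norm_sub_geometric_tail[OF T step r]
  have "cs_norm A (T k \<ominus> T l) < e" if "N \<le> k" "N \<le> l" for k l
  proof (cases "l \<le> k")
    case True
    then show ?thesis using tail small that by (meson le_less_trans)
  next
    case False
    then show ?thesis
      using tail[of k l] small[of k] that norm_sub_commute[OF T T, of k l] by simp
  qed
  then show "\<exists>N. \<forall>k\<ge>N. \<forall>l\<ge>N. cs_norm A (T k \<ominus> T l) < e" by blast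
qed

lemma norm_affine_contraction:
  assumes x: "x \<in> cs_carrier A" and u: "u \<in> cs_carrier A" and v: "v \<in> cs_carrier A"
  shows "cs_norm A ((x \<oplus> x \<otimes> u) \<ominus> (x \<oplus> x \<otimes> v)) \<le> cs_norm A x * cs_norm A (u \<ominus> v)"
proof -
  have "(x \<oplus> x \<otimes> u) \<ominus> (x \<oplus> x \<otimes> v) = x \<otimes> (u \<ominus> v)"
    using add_sub_add_left mult_sub_right mult_closed x u v by simp
  then show ?thesis using norm_mult[OF x sub_closed[OF u v]] by simp
qed

lemma eq_if_norm_sub_arbitrarily_small:
  assumes a: "a \<in> cs_carrier A" and b: "b \<in> cs_carrier A"
    and small: "\<And>e. e > 0 \<Longrightarrow> cs_norm A (a \<ominus> b) < e"
  shows "a = b"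
proof -
  have "cs_norm A (a \<ominus> b) = 0"
    using small norm_nonneg[OF sub_closed[OF a b]] by (metis less_irrefl order_le_less)
  then show ?thesis
    using sub_eq_zero_imp_eq[OF a b] norm_eq_zero[OF sub_closed[OF a b]] by simp
qed

text \<open>In the unitisation, \<open>L = x + x\<^sup>2 + x\<^sup>3 + \<dots>\<close> satisfies \<open>(1 - x) (1 + L) = 1\<close>;
  the defining equation \<open>x + x L = L\<close> and the construction need no unit.\<close>

lemma quasi_inverse_exists:
  assumes x: "x \<in> cs_carrier A" and small: "cs_norm A x < 1"
  obtains L where "L \<in> cs_carrier A" "x \<oplus> x \<otimes> L = L"
proof -
  define T where "T = rec_nat (cs_zero A) (\<lambda>_ t. x \<oplus> x \<otimes> t)"
  have T_Suc: "T (Suc n) = x \<oplus> x \<otimes> T n" for n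
    by (simp add: T_def)
  have T: "T n \<in> cs_carrier A" for n
    by (induction n) (simp_all add: T_def zero_closed add_closed mult_closed x)
  have step: "cs_norm A (T (Suc n) \<ominus> T n) \<le> cs_norm A (T 1 \<ominus> T 0) * cs_norm A x ^ n" for n
  proof (induction n)
    case (Suc n)
    have "T (Suc (Suc n)) \<ominus> T (Suc n) = (x \<oplus> x \<otimes> T (Suc n)) \<ominus> (x \<oplus> x \<otimes> T n)"
      by (simp only: T_Suc)
    then have "cs_norm A (T (Suc (Suc n)) \<ominus> T (Suc n)) \<le> cs_norm A x * cs_norm A (T (Suc n) \<ominus> T n)"
      using norm_affine_contraction[OF x T T] by simp
    also have "\<dots> \<le> cs_norm A x * (cs_norm A (T 1 \<ominus> T 0) * cs_norm A x ^ n)"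
      using Suc.IH norm_nonneg[OF x] by (rule mult_left_mono)
    finally show ?case by (simp add: algebra_simps)
  qed simp
  obtain L where L: "L \<in> cs_carrier A"
    and lim: "\<forall>e>0. \<exists>N. \<forall>k\<ge>N. cs_norm A (T k \<ominus> L) < e"
    using complete[OF T cauchy_of_geometric_steps[OF T step norm_nonneg[OF x] small]] by blast
  have xL: "x \<oplus> x \<otimes> L \<in> cs_carrier A"
    using add_closed mult_closed x L by blast
  have "cs_norm A (L \<ominus> (x \<oplus> x \<otimes> L)) < e" if "e > 0" for e
  proof -
    obtain N where N: "\<And>k. k \<ge> N \<Longrightarrow> cs_norm A (T k \<ominus> L) < e / 2"
      using lim \<open>e > 0\<close> by (meson half_gt_zero)
    have "cs_norm A (T (Suc N) \<ominus> (x \<oplus> x \<otimes> L)) \<le> cs_norm A x * cs_norm A (T N \<ominus> L)"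
      unfolding T_Suc by (rule norm_affine_contraction[OF x T L])
    also have "\<dots> \<le> cs_norm A (T N \<ominus> L)"
      using small norm_nonneg[OF x] norm_nonneg[OF sub_closed[OF T L], of N]
      by (simp add: mult_left_le_one_le)
    finally have "cs_norm A (T (Suc N) \<ominus> (x \<oplus> x \<otimes> L)) < e / 2"
      using N[of N] by simp
    moreover have "cs_norm A (L \<ominus> T (Suc N)) < e / 2"
      using N[of "Suc N"] norm_sub_commute[OF T L] by simp
    ultimately show ?thesis
      using norm_sub_triangle[OF L T xL, of "Suc N"] by simp
  qed
  then have "L = x \<oplus> x \<otimes> L"
    by (rule eq_if_norm_sub_arbitrarily_small[OF L xL])
  then show ?thesis using that L by simp
qed

lemma character_sub:
  assumes "is_character A \<phi>" "x \<in> cs_carrier A" "y \<in> cs_carrier A"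
  shows "\<phi> (x \<ominus> y) = \<phi> x - \<phi> y"
  using assms smult_closed unfolding is_character_def cs_sub_def by simp

lemma character_norm_le:
  assumes \<phi>: "is_character A \<phi>" and x: "x \<in> cs_carrier A"
  shows "cmod (\<phi> x) \<le> cs_norm A x"
proof (rule ccontr)
  assume "\<not> ?thesis"
  then have less: "cs_norm A x < cmod (\<phi> x)" by simp
  then have nz: "\<phi> x \<noteq> 0" using norm_nonneg[OF x] by auto
  define y where "y = (1 / \<phi> x) \<odot> x"
  have y: "y \<in> cs_carrier A" unfolding y_def using smult_closed x by blast
  have "cs_norm A y = cs_norm A x / cmod (\<phi> x)"
    unfolding y_def using norm_smult[OF x] by (simp add: norm_divide)
  then have "cs_norm A y < 1" using less nz by simp
  then obtain L where L: "L \<in> cs_carrier A" "y \<oplus> y \<otimes> L = L"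
    using quasi_inverse_exists y by blast
  have "\<phi> y = 1" unfolding y_def using \<phi> x nz by (simp add: is_character_def)
  then have "\<phi> L = 1 + \<phi> L"
    using \<phi> L y mult_closed by (metis is_character_def mult_1)
  then show False by simp
qed

end

definition cs_closed :: "'a cstar \<Rightarrow> bool" where
  "cs_closed A \<longleftrightarrow>
     (\<forall>x\<in>cs_carrier A. \<forall>y\<in>cs_carrier A. cs_add A x y \<in> cs_carrier A \<and> cs_mult A x y \<in> cs_carrier A) \<and>
     (\<forall>c. \<forall>x\<in>cs_carrier A. cs_smult A c x \<in> cs_carrier A)"

lemma star_hom_closed: "is_star_hom A B q \<Longrightarrow> x \<in> cs_carrier A \<Longrightarrow> q x \<in> cs_carrier B"
  by (simp add: is_star_hom_def)

lemma star_hom_mult_kernel: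
  assumes B: "banach_algebra B" and q: "is_star_hom A B q"
    and x: "x \<in> cs_carrier A" and y: "y \<in> cs_carrier A" and "q x = cs_zero B \<or> q y = cs_zero B"
  shows "q (cs_mult A x y) = cs_zero B"
proof -
  interpret B: banach_algebra B by (fact B)
  have "q (cs_mult A x y) = cs_mult B (q x) (q y)"
    using q x y by (simp add: is_star_hom_def)
  then show ?thesis
    using assms(5) B.mult_zero_left B.mult_zero_right star_hom_closed[OF q] x y by auto
qed

lemma character_kernel_prime:
  fixes m :: nat
  assumes B: "\<And>i. i < m \<Longrightarrow> banach_algebra (B i)"
    and q: "\<And>i. i < m \<Longrightarrow> is_star_hom A (B i) (q i)"
    and A: "cs_closed A"
    and \<phi>: "is_character A \<phi>"
    and e: "e \<in> cs_carrier A" "\<phi> e \<noteq> 0"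
    and vanish: "\<And>x. x \<in> cs_carrier A \<Longrightarrow> \<forall>i<m. q i x = cs_zero (B i) \<Longrightarrow> \<phi> x = 0"
  shows "\<exists>i<m. \<forall>x\<in>cs_carrier A. q i x = cs_zero (B i) \<longrightarrow> \<phi> x = 0"
proof (rule ccontr)
  assume "\<not> ?thesis"
  then obtain F where F: "\<And>i. i < m \<Longrightarrow>
      F i \<in> cs_carrier A \<and> q i (F i) = cs_zero (B i) \<and> \<phi> (F i) \<noteq> 0"
    by metis
  \<comment> \<open>\<open>G k = e F\<^sub>0 \<cdots> F\<^sub>k\<^sub>-\<^sub>1\<close> lies in \<open>ker q\<^sub>j\<close> for all \<open>j < k\<close> but not in \<open>ker \<phi>\<close>\<close>
  define G where "G = rec_nat e (\<lambda>k g. cs_mult A g (F k))"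
  have "G k \<in> cs_carrier A \<and> (\<forall>j<k. q j (G k) = cs_zero (B j)) \<and> \<phi> (G k) \<noteq> 0" if "k \<le> m" for k
    using that
  proof (induction k)
    case 0
    show ?case using e by (simp add: G_def)
  next
    case (Suc k)
    then have k: "k < m" and IH: "G k \<in> cs_carrier A" "\<forall>j<k. q j (G k) = cs_zero (B j)" "\<phi> (G k) \<noteq> 0"
      by auto
    have G_Suc: "G (Suc k) = cs_mult A (G k) (F k)" by (simp add: G_def)
    have "q j (G (Suc k)) = cs_zero (B j)" if "j < Suc k" for j
      unfolding G_Suc using that k IH(1,2) F[OF k]
      by (intro star_hom_mult_kernel[OF B q]) (auto simp: less_Suc_eq)
    moreover have "G (Suc k) \<in> cs_carrier A" "\<phi> (G (Suc k)) \<noteq> 0"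
      using A \<phi> IH F[OF k] unfolding G_Suc cs_closed_def is_character_def by auto
    ultimately show ?case by blast
  qed
  then show False using vanish by blast
qed

lemma character_eq_if_star_hom_eq:
  assumes B: "banach_algebra B" and q: "is_star_hom A B q" and A: "cs_closed A"
    and \<phi>: "is_character A \<phi>" and ker: "\<And>x. x \<in> cs_carrier A \<Longrightarrow> q x = cs_zero B \<Longrightarrow> \<phi> x = 0"
    and x: "x \<in> cs_carrier A" and x': "x' \<in> cs_carrier A" and eq: "q x = q x'"
  shows "\<phi> x = \<phi> x'"
proof -
  interpret B: banach_algebra B by (fact B)
  define d where "d = cs_add A x (cs_smult A (-1) x')"
  have d: "d \<in> cs_carrier A" using A x x' unfolding d_def cs_closed_def by blast
  have "q d = cs_sub B (q x) (q x')"
    using q A x x' unfolding d_def cs_sub_def is_star_hom_def cs_closed_def by simp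
  then have "q d = cs_zero B" using B.sub_self star_hom_closed[OF q x] eq by simp
  then have "\<phi> d = 0" using ker d by blast
  then show ?thesis using \<phi> A x x' unfolding d_def is_character_def cs_closed_def by simp
qed

lemma character_factors_through_surjection:
  assumes B: "banach_algebra B" and q: "is_star_hom A B q" and onto: "q ` cs_carrier A = cs_carrier B"
    and A: "cs_closed A" and \<phi>: "is_character A \<phi>"
    and ker: "\<And>x. x \<in> cs_carrier A \<Longrightarrow> q x = cs_zero B \<Longrightarrow> \<phi> x = 0"
  obtains \<psi> where "is_character B \<psi>" "\<And>x. x \<in> cs_carrier A \<Longrightarrow> \<psi> (q x) = \<phi> x"
proof -
  define \<psi> where "\<psi> b = \<phi> (SOME x. x \<in> cs_carrier A \<and> q x = b)" for b
  have \<psi>_q: "\<psi> (q x) = \<phi> x" if x: "x \<in> cs_carrier A" for x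
  proof -
    have "(SOME x'. x' \<in> cs_carrier A \<and> q x' = q x) \<in> cs_carrier A \<and>
          q (SOME x'. x' \<in> cs_carrier A \<and> q x' = q x) = q x"
      using someI[of "\<lambda>x'. x' \<in> cs_carrier A \<and> q x' = q x" x] x by simp
    then show ?thesis
      unfolding \<psi>_def using character_eq_if_star_hom_eq[OF B q A \<phi> ker] x by metis
  qed
  have lift: "\<exists>x\<in>cs_carrier A. b = q x" if "b \<in> cs_carrier B" for b
    using that onto by blast
  have "is_character B \<psi>"
    unfolding is_character_def
  proof (intro conjI ballI allI)
    fix b b' assume "b \<in> cs_carrier B" "b' \<in> cs_carrier B"
    then obtain x x' where x: "x \<in> cs_carrier A" "b = q x" and x': "x' \<in> cs_carrier A" "b' = q x'"
      using lift by blast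
    show "\<psi> (cs_add B b b') = \<psi> b + \<psi> b'" "\<psi> (cs_mult B b b') = \<psi> b * \<psi> b'"
      using q A \<phi> x x' \<psi>_q unfolding is_star_hom_def cs_closed_def is_character_def
      by (metis (no_types, lifting))+
  next
    fix c b assume "b \<in> cs_carrier B"
    then obtain x where x: "x \<in> cs_carrier A" "b = q x"
      using lift by blast
    show "\<psi> (cs_smult B c b) = c * \<psi> b"
      using q A \<phi> x \<psi>_q unfolding is_star_hom_def cs_closed_def is_character_def
      by (metis (no_types, lifting))
  qed
  then show ?thesis using that \<psi>_q by blast
qed

lemma path_alg_carrier_point:
  "s \<in> cs_carrier (path_alg B) \<Longrightarrow> t \<in> {0..1} \<Longrightarrow> s t \<in> cs_carrier B"
  by (simp add: path_alg_def)

lemma character_path_eval: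
  assumes \<sigma>: "is_star_hom A (path_alg B) \<sigma>" and \<psi>: "is_character B \<psi>" and t: "t \<in> {0..1}"
  shows "is_character A (\<lambda>a. \<psi> (\<sigma> a t))"
proof -
  have pt: "\<sigma> a t \<in> cs_carrier B" if "a \<in> cs_carrier A" for a
    using path_alg_carrier_point star_hom_closed[OF \<sigma> that] t by blast
  show ?thesis
    using \<sigma> \<psi> pt unfolding is_character_def is_star_hom_def by (simp add: path_alg_def)
qed

lemma (in banach_algebra) continuous_on_character_path:
  assumes \<psi>: "is_character A \<psi>" and s: "s \<in> cs_carrier (path_alg A)"
  shows "continuous_on {0..1} (\<lambda>t. \<psi> (s t))"
  unfolding continuous_on_iff
proof (intro ballI allI impI)
  fix t e :: real assume t: "t \<in> {0..1}" and e: "0 < e"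
  have "\<exists>d>0. \<forall>u\<in>{0..1}. \<bar>u - t\<bar> < d \<longrightarrow> cs_norm A (s u \<ominus> s t) < e"
    using s t e by (simp add: path_alg_def)
  then obtain d where d: "d > 0" "\<And>u. u \<in> {0..1} \<Longrightarrow> \<bar>u - t\<bar> < d \<Longrightarrow> cs_norm A (s u \<ominus> s t) < e"
    by blast
  have "dist (\<psi> (s u)) (\<psi> (s t)) < e" if "u \<in> {0..1}" "dist u t < d" for u
  proof -
    have "dist (\<psi> (s u)) (\<psi> (s t)) = cmod (\<psi> (s u \<ominus> s t))"
      using character_sub[OF \<psi>] path_alg_carrier_point[OF s] that t by (simp add: dist_norm)
    also have "\<dots> \<le> cs_norm A (s u \<ominus> s t)"
      using character_norm_le[OF \<psi>] sub_closed path_alg_carrier_point[OF s] that t by blast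
    also have "\<dots> < e" using d that by (simp add: dist_real_def)
    finally show ?thesis .
  qed
  then show "\<exists>d>0. \<forall>u\<in>{0..1}. dist u t < d \<longrightarrow> dist (\<psi> (s u)) (\<psi> (s t)) < e"
    using d(1) by blast
qed

lemma mnorm_nonneg: "0 \<le> mnorm M"
  unfolding mnorm_def by (rule onorm_pos_le[OF matrix_vector_mul_bounded_linear])

lemma mnorm_zero [simp]: "mnorm (0 :: complex^'m^'m) = 0"
proof -
  have "(\<lambda>x. (0 :: complex^'m^'m) *v x) = (\<lambda>x. 0)" by (rule ext) simp
  then show ?thesis unfolding mnorm_def by (metis (no_types) onorm_zero)
qed

lemma mnorm_add: "mnorm (M + N) \<le> mnorm M + mnorm N"
  unfolding mnorm_def matrix_vector_mult_add_rdistrib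
  by (rule onorm_triangle[OF matrix_vector_mul_bounded_linear matrix_vector_mul_bounded_linear])

lemma mnorm_mult: "mnorm (M ** N) \<le> mnorm M * mnorm N"
proof -
  have "(\<lambda>x. (M ** N) *v x) = (\<lambda>x. M *v x) \<circ> (\<lambda>x. N *v x)"
    by (simp add: o_def matrix_vector_mul_assoc)
  then show ?thesis
    unfolding mnorm_def
    using onorm_compose[OF matrix_vector_mul_bounded_linear matrix_vector_mul_bounded_linear] by simp
qed

lemma norm_axis_complex: "norm (axis j (1::complex)) = 1"
  by (simp add: norm_vec_def L2_set_def axis_def if_distrib[of norm] if_distrib[of "\<lambda>x. x ^ 2"]
      cong: if_cong)

lemma entry_le_mnorm: "cmod (M $ i $ j) \<le> mnorm (M :: complex^'m::finite^'m)"
proof -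
  have "M $ i $ j = (M *v axis j 1) $ i"
    by (simp add: matrix_vector_mult_def axis_def if_distrib cong: if_cong)
  then have "cmod (M $ i $ j) \<le> norm (M *v axis j 1)"
    by (metis Finite_Cartesian_Product.norm_nth_le)
  also have "\<dots> \<le> mnorm M * norm (axis j (1::complex))"
    unfolding mnorm_def by (rule onorm[OF matrix_vector_mul_bounded_linear])
  finally show ?thesis by (simp add: norm_axis_complex)
qed

lemma mnorm_le_entry_sum: "mnorm (M :: complex^'m::finite^'m) \<le> (\<Sum>i\<in>UNIV. \<Sum>j\<in>UNIV. cmod (M $ i $ j))"
  unfolding mnorm_def
proof (rule onorm_le)
  fix x :: "complex^'m"
  have "norm (M *v x) \<le> (\<Sum>i\<in>UNIV. norm ((M *v x) $ i))"
    unfolding norm_vec_def by (rule L2_set_le_sum) simp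
  also have "\<dots> \<le> (\<Sum>i\<in>UNIV. \<Sum>j\<in>UNIV. cmod (M $ i $ j) * norm x)"
  proof (rule sum_mono)
    fix i
    have "norm ((M *v x) $ i) \<le> (\<Sum>j\<in>UNIV. norm (M $ i $ j * x $ j))"
      unfolding matrix_vector_mult_def by (simp add: norm_sum)
    also have "\<dots> \<le> (\<Sum>j\<in>UNIV. cmod (M $ i $ j) * norm x)"
      by (intro sum_mono) (simp add: norm_mult mult_left_mono Finite_Cartesian_Product.norm_nth_le)
    finally show "norm ((M *v x) $ i) \<le> (\<Sum>j\<in>UNIV. cmod (M $ i $ j) * norm x)" .
  qed
  finally show "norm (M *v x) \<le> (\<Sum>i\<in>UNIV. \<Sum>j\<in>UNIV. cmod (M $ i $ j)) * norm x"
    by (simp add: sum_distrib_right)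
qed

lemma mnorm_le_norm: "mnorm (M :: complex^'m::finite^'m) \<le> real CARD('m) * real CARD('m) * norm M"
proof -
  have "(\<Sum>i\<in>UNIV. \<Sum>j\<in>UNIV. cmod (M $ i $ j)) \<le> (\<Sum>i\<in>(UNIV::'m set). \<Sum>j\<in>(UNIV::'m set). norm M)"
    by (intro sum_mono) (meson Finite_Cartesian_Product.norm_nth_le order_trans)
  then show ?thesis using mnorm_le_entry_sum[of M] by simp
qed

lemma bounded_mnorm_on_compact:
  fixes F :: "'a::topological_space \<Rightarrow> complex^'m::finite^'m"
  assumes "compact K" "continuous_on K F"
  obtains C where "\<And>x. x \<in> K \<Longrightarrow> mnorm (F x) \<le> C"
proof -
  obtain b where b: "\<And>x. x \<in> K \<Longrightarrow> norm (F x) \<le> b"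
    using compact_imp_bounded[OF compact_continuous_image[OF assms(2,1)]]
    unfolding bounded_iff by blast
  have "mnorm (F x) \<le> real CARD('m) * real CARD('m) * b" if "x \<in> K" for x
    using mnorm_le_norm[of "F x"] b[OF that] by (meson mult_left_mono order_trans of_nat_0_le_iff
        mult_nonneg_nonneg)
  then show ?thesis using that by blast
qed

lemma matrix_mult_add_right: "(A + B) ** C = A ** C + B ** (C :: 'a::semiring_1^'n^'n)"
  by (simp add: matrix_matrix_mult_def vec_eq_iff sum.distrib distrib_right)

lemma bilinear_matrix_mult: "bilinear ((**) :: complex^'n^'n \<Rightarrow> complex^'n^'n \<Rightarrow> complex^'n^'n)"
  unfolding bilinear_def
  by (auto intro!: linearI simp: matrix_add_ldistrib matrix_mult_add_right
      scalar_matrix_assoc matrix_scalar_ac)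

lemma mnorm_mult_diff_le:
  fixes A B S T :: "complex^'n::finite^'n"
  shows "mnorm (A ** B - S ** T) \<le> mnorm (A - S) * mnorm B + mnorm S * mnorm (B - T)"
proof -
  have "A ** B - S ** T = (A - S) ** B + S ** (B - T)"
    by (simp add: bilinear_lsub[OF bilinear_matrix_mult] bilinear_rsub[OF bilinear_matrix_mult])
  then have "mnorm (A ** B - S ** T) \<le> mnorm ((A - S) ** B) + mnorm (S ** (B - T))"
    by (simp add: mnorm_add)
  also have "\<dots> \<le> mnorm (A - S) * mnorm B + mnorm S * mnorm (B - T)"
    by (intro add_mono mnorm_mult)
  finally show ?thesis .
qed

lemma kron_mult:
  fixes A B C D :: "complex^'n::finite^'n"
  shows "kron A B ** kron C D = kron (A ** C) (B ** D)"
proof -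
  have "(\<Sum>r\<in>UNIV. A $ fst p $ fst r * B $ snd p $ snd r * (C $ fst r $ fst q * D $ snd r $ snd q))
      = (\<Sum>r1\<in>UNIV. A $ fst p $ r1 * C $ r1 $ fst q) * (\<Sum>r2\<in>UNIV. B $ snd p $ r2 * D $ r2 $ snd q)"
    for p q :: "'n \<times> 'n"
  proof -
    have "(\<Sum>r1\<in>UNIV. A $ fst p $ r1 * C $ r1 $ fst q) * (\<Sum>r2\<in>UNIV. B $ snd p $ r2 * D $ r2 $ snd q)
        = (\<Sum>r\<in>UNIV \<times> UNIV. (A $ fst p $ fst r * C $ fst r $ fst q) * (B $ snd p $ snd r * D $ snd r $ snd q))"
      by (simp add: sum_product sum.cartesian_product case_prod_beta)
    then show ?thesis by (simp add: mult_ac)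
  qed
  then show ?thesis by (simp add: kron_def matrix_matrix_mult_def vec_eq_iff)
qed

lemma kron_mat: "kron (mat c) (mat d) = mat (c * d)"
  by (auto simp: kron_def mat_def vec_eq_iff prod_eq_iff)

lemma continuous_on_kron_compose:
  fixes f g :: "real \<Rightarrow> complex^'n::finite^'n"
  assumes f: "continuous_on {0..1} f" and g: "continuous_on {0..1} g"
  shows "continuous_on unit_square (\<lambda>p. kron (f (fst p)) (g (snd p)))"
proof -
  have "continuous_on unit_square (\<lambda>p. f (fst p))"
    by (rule continuous_on_compose2[OF f continuous_on_fst[OF continuous_on_id]]) auto
  moreover have "continuous_on unit_square (\<lambda>p. g (snd p))"
    by (rule continuous_on_compose2[OF g continuous_on_snd[OF continuous_on_id]]) auto
  ultimately show ?thesis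
    unfolding kron_def by (intro continuous_intros)
qed

lemma mat_mult_left: "mat c ** M = msmult c (M :: complex^'n::finite^'n)"
  by (simp add: msmult_def matrix_matrix_mult_def mat_def vec_eq_iff if_distrib[of "\<lambda>x. x * _"]
      cong: if_cong)

lemma mat_mult_mat: "mat c ** mat d = (mat (c * d) :: complex^'n::finite^'n)"
  unfolding mat_mult_left by (simp add: msmult_def mat_def vec_eq_iff)

section \<open>Characters of \<open>D\<^sub>n\<close>\<close>

lemma Dn_simps [simp]:
  "cs_carrier Dn = Dn_set" "cs_add Dn = (\<lambda>f g u. f u + g u)" "cs_mult Dn = (\<lambda>f g u. f u ** g u)"
  by (simp_all add: Dn_def mfun_alg_def)

lemma Dn_set_mult:
  assumes f: "f \<in> Dn_set" and g: "g \<in> Dn_set"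
  shows "(\<lambda>u. f u ** g u) \<in> Dn_set"
  unfolding Dn_set_def
proof (intro CollectI conjI allI impI)
  show "continuous_on {0..1} (\<lambda>u. f u ** g u)"
    using f g unfolding Dn_set_def matrix_matrix_mult_def by (auto intro!: continuous_intros)
  show "f t ** g t = 0" if "t \<notin> {0..1}" for t
    using f that by (simp add: Dn_set_def)
  show "\<exists>c. f 0 ** g 0 = mat c" "\<exists>c. f 1 ** g 1 = mat c"
    using f g by (auto simp: Dn_set_def mat_mult_mat)
qed

definition scaled :: "(real \<Rightarrow> real) \<Rightarrow> complex^'n^'n \<Rightarrow> real \<Rightarrow> complex^'n^'n" where
  "scaled g M u = (if u \<in> {0..1} then g u *\<^sub>R M else 0)"

lemma scaled_in_Dn_set:
  assumes "continuous_on {0..1} g" "\<exists>c. g 0 *\<^sub>R M = mat c" "\<exists>c. g 1 *\<^sub>R M = mat c"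
  shows "scaled g (M :: complex^'n::finite^'n) \<in> Dn_set"
proof -
  have "continuous_on {0..1} (\<lambda>u. g u *\<^sub>R M)"
    using assms(1) by (intro continuous_intros)
  then have "continuous_on {0..1} (scaled g M)"
    by (rule continuous_on_cong[THEN iffD1, rotated 2]) (auto simp: scaled_def)
  then show ?thesis using assms(2,3) by (simp add: Dn_set_def scaled_def)
qed

lemma scaled_vanishing_in_Dn_set:
  "continuous_on {0..1} g \<Longrightarrow> g 0 = 0 \<Longrightarrow> g 1 = 0 \<Longrightarrow> scaled g M \<in> Dn_set"
  by (rule scaled_in_Dn_set) (auto intro: exI[of _ 0])

lemma scaled_mult: "scaled g M u ** scaled h N u = scaled (\<lambda>u. g u * h u) (M ** N) u"
  by (simp add: scaled_def scalar_matrix_assoc matrix_scalar_ac mult.commute)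

lemma scaled_add_fun: "scaled g M u + scaled h M u = scaled (\<lambda>u. g u + h u) M u"
  by (simp add: scaled_def scaleR_left_distrib)

lemma scaled_add_matrix: "scaled g M u + scaled g N u = scaled g (M + N) u"
  by (simp add: scaled_def scaleR_right_distrib)

definition ramp :: "real \<Rightarrow> complex^'n^'n" where
  "ramp = scaled (\<lambda>u. u) (mat 1)"

lemma ramp_in_Dn_set: "ramp \<in> Dn_set"
  unfolding ramp_def by (rule scaled_in_Dn_set) (auto intro: continuous_intros exI[of _ 0] exI[of _ 1])

lemma ramp_0: "ramp 0 = 0" and ramp_1: "ramp 1 = mat 1"
  by (simp_all add: ramp_def scaled_def)

definition matrix_unit :: "'n \<Rightarrow> 'n \<Rightarrow> complex^'n^'n" where
  "matrix_unit a b = (\<chi> i j. if i = a \<and> j = b then 1 else 0)"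

lemma matrix_unit_mult:
  "matrix_unit a b ** matrix_unit c d = (if b = c then matrix_unit a d else 0)"
  by (auto simp: matrix_unit_def matrix_matrix_mult_def vec_eq_iff if_distrib[of "\<lambda>x. x * _"]
      cong: if_cong)

lemma sum_matrix_unit_diag: "(\<Sum>a\<in>UNIV. matrix_unit a a) = (mat 1 :: complex^'n::finite^'n)"
proof -
  have "(\<Sum>a\<in>UNIV. matrix_unit a a $ i $ j) = mat 1 $ i $ j" for i j :: 'n
    by (cases "i = j") (auto simp: matrix_unit_def mat_def intro: sum.neutral)
  then show ?thesis by (simp add: vec_eq_iff sum_component)
qed

lemma Dn_characterD:
  assumes "is_character (Dn :: (real \<Rightarrow> complex^'n::finite^'n) cstar) \<phi>"
    and "f \<in> Dn_set" "g \<in> Dn_set"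
  shows "\<phi> (\<lambda>u. f u + g u) = \<phi> f + \<phi> g" "\<phi> (\<lambda>u. f u ** g u) = \<phi> f * \<phi> g"
  using assms by (simp_all add: is_character_def)

definition bump :: "real \<Rightarrow> real" where
  "bump u = u * (1 - u)"

lemma scaled_bump_in_Dn_set: "scaled bump M \<in> Dn_set"
  unfolding bump_def by (rule scaled_vanishing_in_Dn_set) (auto intro!: continuous_intros)

lemma Dn_character_scaled_zero:
  assumes "is_character (Dn :: (real \<Rightarrow> complex^'n::finite^'n) cstar) \<phi>"
  shows "\<phi> (scaled bump 0) = 0"
  using Dn_characterD(1)[OF assms scaled_bump_in_Dn_set scaled_bump_in_Dn_set, of 0]
  by (simp add: scaled_add_matrix)

text \<open>With \<open>X a b = \<surd>bump \<cdot> matrix_unit a b\<close>, each \<open>X a b\<close> with \<open>a \<noteq> b\<close> squares to zero, so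
  characters kill it, and \<open>bump \<cdot> matrix_unit a a = X a b \<cdot> X b a\<close>.\<close>

lemma Dn_character_bump_diagonal:
  assumes card: "CARD('n::finite) > 1" and \<phi>: "is_character (Dn :: (real \<Rightarrow> complex^'n^'n) cstar) \<phi>"
  shows "\<phi> (scaled bump (matrix_unit a a)) = 0"
proof -
  define X where "X a b = scaled (\<lambda>u. sqrt (bump u)) (matrix_unit a b)" for a b :: 'n
  have X_in: "X a b \<in> Dn_set" for a b
    unfolding X_def bump_def by (rule scaled_vanishing_in_Dn_set) (auto intro!: continuous_intros)
  have XX: "(\<lambda>u. X a b u ** X c d u) = scaled bump (matrix_unit a b ** matrix_unit c d)" for a b c d
  proof
    fix u
    have "u \<in> {0..1} \<Longrightarrow> sqrt (bump u) * sqrt (bump u) = bump u"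
      by (simp add: bump_def)
    then show "X a b u ** X c d u = scaled bump (matrix_unit a b ** matrix_unit c d) u"
      unfolding X_def scaled_mult by (simp add: scaled_def)
  qed
  have off_diagonal: "\<phi> (X a b) = 0" if "a \<noteq> b" for a b
    using Dn_characterD(2)[OF \<phi> X_in X_in, of a b a b] that Dn_character_scaled_zero[OF \<phi>]
    by (simp add: XX matrix_unit_mult)
  have "\<exists>b::'n. b \<noteq> a"
  proof (rule ccontr)
    assume "\<not> ?thesis"
    then have "UNIV = {a}" by auto
    then have "CARD('n) = card {a}" by (rule arg_cong)
    then show False using card by simp
  qed
  then obtain b where "b \<noteq> a" by blast
  moreover have "\<phi> (scaled bump (matrix_unit a a)) = \<phi> (X a b) * \<phi> (X b a)"
    using Dn_characterD(2)[OF \<phi> X_in X_in, of a b b a] by (simp add: XX matrix_unit_mult)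
  ultimately show ?thesis using off_diagonal by simp
qed

lemma Dn_character_bump_one:
  assumes card: "CARD('n::finite) > 1" and \<phi>: "is_character (Dn :: (real \<Rightarrow> complex^'n^'n) cstar) \<phi>"
  shows "\<phi> (scaled bump (mat 1)) = 0"
proof -
  have "\<phi> (scaled bump (\<Sum>a\<in>S. matrix_unit a a)) = 0" if "finite S" for S
    using that
  proof (induction S rule: finite_induct)
    case empty
    then show ?case using Dn_character_scaled_zero[OF \<phi>] by simp
  next
    case (insert a S)
    have "scaled bump (\<Sum>a\<in>insert a S. matrix_unit a a)
        = (\<lambda>u. scaled bump (matrix_unit a a) u + scaled bump (\<Sum>a\<in>S. matrix_unit a a) u)"
      using insert.hyps by (simp add: scaled_add_matrix)
    then show ?case
      using Dn_characterD(1)[OF \<phi> scaled_bump_in_Dn_set scaled_bump_in_Dn_set]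
        Dn_character_bump_diagonal[OF card \<phi>] insert.IH by simp
  qed
  then show ?thesis using sum_matrix_unit_diag by (metis finite)
qed

lemma Dn_character_ramp:
  assumes card: "CARD('n::finite) > 1" and \<phi>: "is_character (Dn :: (real \<Rightarrow> complex^'n^'n) cstar) \<phi>"
  shows "\<phi> ramp = 0 \<or> \<phi> ramp = 1"
proof -
  have "ramp = (\<lambda>u. scaled bump (mat 1) u + ramp u ** ramp u)"
    by (auto simp: ramp_def scaled_mult scaled_add_fun bump_def algebra_simps)
  then have "\<phi> ramp = \<phi> (\<lambda>u. scaled bump (mat 1) u + ramp u ** ramp u)"
    by (rule arg_cong)
  also have "\<dots> = \<phi> ramp * \<phi> ramp"
    using Dn_characterD(1)[OF \<phi> scaled_bump_in_Dn_set Dn_set_mult[OF ramp_in_Dn_set ramp_in_Dn_set]]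
      Dn_characterD(2)[OF \<phi> ramp_in_Dn_set ramp_in_Dn_set] Dn_character_bump_one[OF card \<phi>]
    by simp
  finally show ?thesis by auto
qed

section \<open>The tensor product \<open>D\<^sub>n \<otimes> D\<^sub>n\<close> and its corner characters\<close>

lemma DnDn_simps [simp]:
  "cs_carrier DnDn = DnDn_set" "cs_zero DnDn = (\<lambda>_. 0)" "cs_add DnDn = (\<lambda>F G p. F p + G p)"
  "cs_mult DnDn = (\<lambda>F G p. F p ** G p)" "cs_smult DnDn = (\<lambda>c F p. msmult c (F p))"
  by (simp_all add: DnDn_def mfun_alg_def)

definition kron_sum ::
  "nat \<Rightarrow> (nat \<Rightarrow> real \<Rightarrow> complex^'n^'n) \<Rightarrow> (nat \<Rightarrow> real \<Rightarrow> complex^'n^'n) \<Rightarrow>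
   real \<times> real \<Rightarrow> complex^('n::finite\<times>'n)^('n\<times>'n)" where
  "kron_sum k fs gs p = (\<Sum>i<k. kron (fs i (fst p)) (gs i (snd p)))"

definition kron_sums :: "(real \<times> real \<Rightarrow> complex^('n::finite\<times>'n)^('n\<times>'n)) set" where
  "kron_sums = {kron_sum k fs gs | k fs gs. \<forall>i<k. fs i \<in> Dn_set \<and> gs i \<in> Dn_set}"

lemma DnDn_set_iff:
  "F \<in> DnDn_set \<longleftrightarrow> (\<forall>p. p \<notin> unit_square \<longrightarrow> F p = 0) \<and>
     (\<forall>e>0. \<exists>S\<in>kron_sums. \<forall>p\<in>unit_square. mnorm (F p - S p) < e)"
  unfolding DnDn_set_def kron_sums_def kron_sum_def[symmetric] by blast

lemma kron_sums_sum:
  fixes fs gs :: "'i \<Rightarrow> real \<Rightarrow> complex^'n::finite^'n"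
  assumes I: "finite I" and fg: "\<And>i. i \<in> I \<Longrightarrow> fs i \<in> Dn_set \<and> gs i \<in> Dn_set"
  shows "(\<lambda>p. \<Sum>i\<in>I. kron (fs i (fst p)) (gs i (snd p))) \<in> kron_sums"
proof -
  obtain h where h: "bij_betw h {..<card I} I"
    using ex_bij_betw_nat_finite[OF I] lessThan_atLeast0 by metis
  have "(\<Sum>i\<in>I. kron (fs i (fst p)) (gs i (snd p))) = (\<Sum>i<card I. kron (fs (h i) (fst p)) (gs (h i) (snd p)))"
    for p using sum.reindex_bij_betw[OF h, symmetric] by simp
  then show ?thesis
    unfolding kron_sums_def kron_sum_def using fg bij_betwE[OF h]
    by (intro CollectI exI[of _ "card I"] exI[of _ "fs \<circ> h"] exI[of _ "gs \<circ> h"]) auto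
qed

lemma kron_sumsE:
  assumes "S \<in> kron_sums"
  obtains k fs gs where "\<And>i. i < k \<Longrightarrow> fs i \<in> Dn_set \<and> gs i \<in> Dn_set" "S = kron_sum k fs gs"
  using assms unfolding kron_sums_def by blast

lemma kron_sums_add:
  assumes "S \<in> kron_sums" "T \<in> kron_sums"
  shows "(\<lambda>p. S p + T p) \<in> kron_sums"
proof -
  obtain k fs gs where fg: "\<And>i. i < k \<Longrightarrow> fs i \<in> Dn_set \<and> gs i \<in> Dn_set"
    and S: "S = kron_sum k fs gs"
    using assms(1) by (elim kron_sumsE) blast
  obtain l fs' gs' where fg': "\<And>i. i < l \<Longrightarrow> fs' i \<in> Dn_set \<and> gs' i \<in> Dn_set"
    and T: "T = kron_sum l fs' gs'"
    using assms(2) by (elim kron_sumsE) blast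
  have "(\<lambda>p. \<Sum>i\<in>{..<k} <+> {..<l}. kron (case_sum fs fs' i (fst p)) (case_sum gs gs' i (snd p)))
      \<in> kron_sums"
    using fg fg' by (intro kron_sums_sum) auto
  moreover have "(\<lambda>p. \<Sum>i\<in>{..<k} <+> {..<l}. kron (case_sum fs fs' i (fst p)) (case_sum gs gs' i (snd p)))
      = (\<lambda>p. S p + T p)"
    unfolding S T kron_sum_def by (simp add: sum.Plus o_def)
  ultimately show ?thesis by simp
qed

lemma kron_sums_mult:
  assumes "S \<in> kron_sums" "T \<in> kron_sums"
  shows "(\<lambda>p. S p ** T p) \<in> kron_sums"
proof -
  obtain k fs gs where fg: "\<And>i. i < k \<Longrightarrow> fs i \<in> Dn_set \<and> gs i \<in> Dn_set"
    and S: "S = kron_sum k fs gs"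
    using assms(1) by (elim kron_sumsE) blast
  obtain l fs' gs' where fg': "\<And>i. i < l \<Longrightarrow> fs' i \<in> Dn_set \<and> gs' i \<in> Dn_set"
    and T: "T = kron_sum l fs' gs'"
    using assms(2) by (elim kron_sumsE) blast
  define F where "F = (\<lambda>(i, j) u. fs i u ** fs' j u)"
  define G where "G = (\<lambda>(i, j) u. gs i u ** gs' j u)"
  have "(\<lambda>p. \<Sum>ij\<in>{..<k} \<times> {..<l}. kron (F ij (fst p)) (G ij (snd p))) \<in> kron_sums"
    using fg fg' by (intro kron_sums_sum) (auto simp: F_def G_def intro: Dn_set_mult)
  moreover have "(\<lambda>p. \<Sum>ij\<in>{..<k} \<times> {..<l}. kron (F ij (fst p)) (G ij (snd p))) = (\<lambda>p. S p ** T p)"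
    unfolding S T kron_sum_def bilinear_sum[OF bilinear_matrix_mult]
    by (simp add: F_def G_def kron_mult case_prod_beta)
  ultimately show ?thesis by simp
qed

lemma kron_sums_bounded:
  assumes "S \<in> kron_sums"
  obtains C where "0 \<le> C" "\<And>p. p \<in> unit_square \<Longrightarrow> mnorm (S p) \<le> C"
proof -
  obtain k fs gs where fg: "\<And>i. i < k \<Longrightarrow> fs i \<in> Dn_set \<and> gs i \<in> Dn_set"
    and S: "S = kron_sum k fs gs"
    using assms by (elim kron_sumsE) blast
  have "continuous_on unit_square S"
    unfolding S kron_sum_def using fg
    by (intro continuous_on_sum continuous_on_kron_compose) (auto simp: Dn_set_def)
  then obtain C where "\<And>p. p \<in> unit_square \<Longrightarrow> mnorm (S p) \<le> C"
    using bounded_mnorm_on_compact[OF compact_Times[OF compact_Icc compact_Icc]] by blast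
  then show ?thesis
    using that[of "max C 0"] by fastforce
qed

lemma kron_sums_corner_off_diagonal:
  assumes "S \<in> kron_sums" "a \<noteq> b"
  shows "S (0, 1) $ a $ b = 0"
proof -
  obtain k fs gs where fg: "\<And>i. i < k \<Longrightarrow> fs i \<in> Dn_set \<and> gs i \<in> Dn_set"
    and S: "S = kron_sum k fs gs"
    using assms(1) by (elim kron_sumsE) blast
  have "kron (fs i 0) (gs i 1) $ a $ b = 0" if i: "i < k" for i
  proof -
    obtain c d where "fs i 0 = mat c" "gs i 1 = mat d"
      using fg[OF i] by (auto simp: Dn_set_def)
    then have "kron (fs i 0) (gs i 1) = mat (c * d)" by (simp add: kron_mat)
    then show ?thesis using assms(2) by (simp add: mat_def)
  qed
  then show ?thesis unfolding S kron_sum_def by (simp add: sum_component)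
qed

lemma DnDn_set_vanishes: "F \<in> DnDn_set \<Longrightarrow> p \<notin> unit_square \<Longrightarrow> F p = 0"
  unfolding DnDn_set_iff by blast

lemma DnDn_set_approx:
  assumes "F \<in> DnDn_set" "e > 0"
  obtains S where "S \<in> kron_sums" "\<And>p. p \<in> unit_square \<Longrightarrow> mnorm (F p - S p) < e"
  using assms unfolding DnDn_set_iff by blast

lemma DnDn_set_add:
  assumes F: "F \<in> DnDn_set" and G: "G \<in> DnDn_set"
  shows "(\<lambda>p. F p + G p) \<in> DnDn_set"
  unfolding DnDn_set_iff
proof (intro conjI allI impI)
  show "F p + G p = 0" if "p \<notin> unit_square" for p
    using DnDn_set_vanishes[OF F that] DnDn_set_vanishes[OF G that] by simp
  fix e :: real assume "e > 0"
  then obtain S T where S: "S \<in> kron_sums" "\<And>p. p \<in> unit_square \<Longrightarrow> mnorm (F p - S p) < e / 2"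
    and T: "T \<in> kron_sums" "\<And>p. p \<in> unit_square \<Longrightarrow> mnorm (G p - T p) < e / 2"
    using DnDn_set_approx[OF F] DnDn_set_approx[OF G] half_gt_zero by metis
  have "mnorm (F p + G p - (S p + T p)) < e" if "p \<in> unit_square" for p
    using mnorm_add[of "F p - S p" "G p - T p"] S(2)[OF that] T(2)[OF that]
    by (simp add: algebra_simps)
  then show "\<exists>U\<in>kron_sums. \<forall>p\<in>unit_square. mnorm (F p + G p - U p) < e"
    using kron_sums_add[OF S(1) T(1)] by (intro bexI[of _ "\<lambda>p. S p + T p"]) auto
qed

lemma DnDn_set_bounded:
  assumes "F \<in> DnDn_set"
  obtains C where "0 \<le> C" "\<And>p. p \<in> unit_square \<Longrightarrow> mnorm (F p) \<le> C"
proof -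
  obtain S where S: "S \<in> kron_sums" "\<And>p. p \<in> unit_square \<Longrightarrow> mnorm (F p - S p) < 1"
    using DnDn_set_approx[OF assms zero_less_one] by blast
  obtain C where C: "0 \<le> C" "\<And>p. p \<in> unit_square \<Longrightarrow> mnorm (S p) \<le> C"
    using kron_sums_bounded[OF S(1)] by blast
  have "mnorm (F p) \<le> 1 + C" if "p \<in> unit_square" for p
    using mnorm_add[of "F p - S p" "S p"] S(2)[OF that] C(2)[OF that] by simp
  then show ?thesis using that[of "1 + C"] C(1) by simp
qed

lemma product_lt_half:
  fixes a M e :: real
  assumes "0 \<le> a" "0 \<le> M" "a < e / (2 * (M + 1))"
  shows "a * M < e / 2"
proof -
  have "a * (M + 1) < e / 2"
    using assms by (simp add: less_divide_eq field_simps)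
  moreover have "a * M \<le> a * (M + 1)"
    using assms by (simp add: mult_left_mono)
  ultimately show ?thesis by linarith
qed

lemma DnDn_set_mult:
  assumes F: "F \<in> DnDn_set" and G: "G \<in> DnDn_set"
  shows "(\<lambda>p. F p ** G p) \<in> DnDn_set"
  unfolding DnDn_set_iff
proof (intro conjI allI impI)
  show "F p ** G p = 0" if "p \<notin> unit_square" for p
    using DnDn_set_vanishes[OF F that] by simp
  fix e :: real assume e: "e > 0"
  obtain MG where MG: "0 \<le> MG" "\<And>p. p \<in> unit_square \<Longrightarrow> mnorm (G p) \<le> MG"
    using DnDn_set_bounded[OF G] by blast
  have "e / (2 * (MG + 1)) > 0" using e MG(1) by simp
  then obtain S where S: "S \<in> kron_sums" "\<And>p. p \<in> unit_square \<Longrightarrow> mnorm (F p - S p) < e / (2 * (MG + 1))"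
    using DnDn_set_approx[OF F] by blast
  obtain MS where MS: "0 \<le> MS" "\<And>p. p \<in> unit_square \<Longrightarrow> mnorm (S p) \<le> MS"
    using kron_sums_bounded[OF S(1)] by blast
  have "e / (2 * (MS + 1)) > 0" using e MS(1) by simp
  then obtain T where T: "T \<in> kron_sums" "\<And>p. p \<in> unit_square \<Longrightarrow> mnorm (G p - T p) < e / (2 * (MS + 1))"
    using DnDn_set_approx[OF G] by blast
  have "mnorm (F p ** G p - S p ** T p) < e" if p: "p \<in> unit_square" for p
  proof -
    have "mnorm (F p ** G p - S p ** T p)
        \<le> mnorm (F p - S p) * mnorm (G p) + mnorm (S p) * mnorm (G p - T p)"
      by (rule mnorm_mult_diff_le)
    also have "\<dots> \<le> mnorm (F p - S p) * MG + MS * mnorm (G p - T p)"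
      using MG(2)[OF p] MS(2)[OF p] mnorm_nonneg by (intro add_mono mult_left_mono mult_right_mono) auto
    also have "\<dots> < e / 2 + e / 2"
    proof (rule add_strict_mono)
      show "mnorm (F p - S p) * MG < e / 2"
        by (rule product_lt_half[OF mnorm_nonneg MG(1) S(2)[OF p]])
      show "MS * mnorm (G p - T p) < e / 2"
        using product_lt_half[OF mnorm_nonneg MS(1) T(2)[OF p]] by (simp only: mult.commute)
    qed
    finally show ?thesis by simp
  qed
  then show "\<exists>U\<in>kron_sums. \<forall>p\<in>unit_square. mnorm (F p ** G p - U p) < e"
    using kron_sums_mult[OF S(1) T(1)] by (intro bexI[of _ "\<lambda>p. S p ** T p"]) auto
qed

lemma single_kron_in_DnDn_set:
  assumes "f \<in> Dn_set" "g \<in> Dn_set"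
  shows "(\<lambda>p. if p \<in> unit_square then kron (f (fst p)) (g (snd p)) else 0) \<in> DnDn_set"
  unfolding DnDn_set_iff
proof (intro conjI allI impI)
  fix e :: real assume "e > 0"
  moreover have "kron_sum 1 (\<lambda>_. f) (\<lambda>_. g) \<in> kron_sums"
    using assms unfolding kron_sums_def by blast
  ultimately show "\<exists>S\<in>kron_sums. \<forall>p\<in>unit_square.
      mnorm ((if p \<in> unit_square then kron (f (fst p)) (g (snd p)) else 0) - S p) < e"
    by (intro bexI[of _ "kron_sum 1 (\<lambda>_. f) (\<lambda>_. g)"]) (auto simp: kron_sum_def)
qed simp

lemma constant_in_Dn_set: "scaled (\<lambda>_. 1) (mat c) \<in> Dn_set"
  by (rule scaled_in_Dn_set) auto

lemma p0_in_DnDn_set: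
  assumes "a \<in> Dn_set"
  shows "p0 a \<in> DnDn_set"
proof -
  have "p0 a = (\<lambda>p. if p \<in> unit_square then kron (a (fst p)) (scaled (\<lambda>_. 1) (mat 1) (snd p)) else 0)"
    by (auto simp: p0_def scaled_def mem_Times_iff)
  then show ?thesis using single_kron_in_DnDn_set[OF assms constant_in_Dn_set] by simp
qed

lemma p1_in_DnDn_set:
  assumes "a \<in> Dn_set"
  shows "p1 a \<in> DnDn_set"
proof -
  have "p1 a = (\<lambda>p. if p \<in> unit_square then kron (scaled (\<lambda>_. 1) (mat 1) (fst p)) (a (snd p)) else 0)"
    by (auto simp: p1_def scaled_def mem_Times_iff)
  then show ?thesis using single_kron_in_DnDn_set[OF constant_in_Dn_set assms] by simp
qed

lemma DnDn_set_smult: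
  assumes F: "F \<in> DnDn_set"
  shows "(\<lambda>p. msmult c (F p)) \<in> DnDn_set"
proof -
  have "(\<lambda>p. msmult c (F p)) = (\<lambda>p. p0 (scaled (\<lambda>_. 1) (mat c)) p ** F p)"
  proof
    fix p :: "real \<times> real"
    show "msmult c (F p) = p0 (scaled (\<lambda>_. 1) (mat c)) p ** F p"
      using DnDn_set_vanishes[OF F, of p]
      by (auto simp: p0_def scaled_def kron_mat mat_mult_left msmult_def vec_eq_iff mem_Times_iff)
  qed
  then show ?thesis
    using DnDn_set_mult[OF p0_in_DnDn_set[OF constant_in_Dn_set] F] by simp
qed

lemma cs_closed_DnDn: "cs_closed DnDn"
  by (simp add: cs_closed_def DnDn_set_add DnDn_set_mult DnDn_set_smult)

lemma DnDn_corner_off_diagonal: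
  assumes F: "F \<in> DnDn_set" and ab: "a \<noteq> b"
  shows "F (0, 1) $ a $ b = 0"
proof -
  have "cmod (F (0, 1) $ a $ b) < e" if "e > 0" for e
  proof -
    obtain S where S: "S \<in> kron_sums" "\<And>p. p \<in> unit_square \<Longrightarrow> mnorm (F p - S p) < e"
      using DnDn_set_approx[OF F \<open>e > 0\<close>] by blast
    have "cmod (F (0, 1) $ a $ b) = cmod ((F (0, 1) - S (0, 1)) $ a $ b)"
      using kron_sums_corner_off_diagonal[OF S(1) ab] by simp
    also have "\<dots> \<le> mnorm (F (0, 1) - S (0, 1))"
      by (rule entry_le_mnorm)
    also have "\<dots> < e"
      using S(2) by simp
    finally show ?thesis .
  qed
  then show ?thesis
    by (metis less_irrefl norm_le_zero_iff not_le)
qed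

text \<open>Elements of \<open>D\<^sub>n\<close> are scalar at \<open>0\<close> and \<open>1\<close>, so elementary tensors are scalar at the
  corner \<open>(0, 1)\<close>; by approximation every \<open>F (0, 1)\<close> is diagonal, which makes its diagonal
  entries multiplicative.\<close>

definition corner_entry :: "'n \<times> 'n \<Rightarrow> (real \<times> real \<Rightarrow> complex^('n::finite\<times>'n)^('n\<times>'n)) \<Rightarrow> complex"
  where "corner_entry k F = F (0, 1) $ k $ k"

lemma corner_entry_mult:
  assumes "F \<in> DnDn_set"
  shows "corner_entry k (\<lambda>p. F p ** G p) = corner_entry k F * corner_entry k G"
proof -
  have "(\<Sum>r\<in>UNIV. F (0, 1) $ k $ r * G (0, 1) $ r $ k) = (\<Sum>r\<in>{k}. F (0, 1) $ k $ r * G (0, 1) $ r $ k)"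
    by (rule sum.mono_neutral_right) (auto simp: DnDn_corner_off_diagonal[OF assms])
  then show ?thesis by (simp add: corner_entry_def matrix_matrix_mult_def)
qed

lemma is_character_corner_entry: "is_character DnDn (corner_entry k)"
  by (simp add: is_character_def corner_entry_mult) (simp add: corner_entry_def msmult_def)

lemma corner_entry_p0: "corner_entry k (p0 a) = a 0 $ fst k $ fst k"
  by (simp add: corner_entry_def p0_def kron_def mat_def)

lemma corner_entry_p1: "corner_entry k (p1 a) = a 1 $ snd k $ snd k"
  by (simp add: corner_entry_def p1_def kron_def mat_def)

section \<open>Topological complexity\<close>

lemma character_path_ramp_constant:
  assumes card: "CARD('n::finite) > 1" and B: "banach_algebra B" and \<psi>: "is_character B \<psi>"
    and \<sigma>: "is_star_hom (Dn :: (real \<Rightarrow> complex^'n^'n) cstar) (path_alg B) \<sigma>"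
  shows "\<psi> (\<sigma> ramp 0) = \<psi> (\<sigma> ramp 1)"
proof -
  define g where "g t = \<psi> (\<sigma> ramp t)" for t
  have "continuous_on {0..1} g"
    unfolding g_def using ramp_in_Dn_set
    by (intro banach_algebra.continuous_on_character_path[OF B \<psi>] star_hom_closed[OF \<sigma>]) simp
  moreover have "g ` {0..1} \<subseteq> {0, 1}"
    unfolding g_def using Dn_character_ramp[OF card character_path_eval[OF \<sigma> \<psi>]] by blast
  ultimately have "g constant_on {0..1}"
    using continuous_finite_range_constant[OF connected_Icc] finite_subset by blast
  then show ?thesis by (auto simp: g_def constant_on_def)
qed

lemma TC_data_corner_character:
  assumes TC: "TC_data (Dn :: (real \<Rightarrow> complex^'n::finite^'n) cstar) DnDn p0 p1 m B q \<sigma>"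
  obtains i \<psi> where "i < m" "banach_algebra (B i)" "is_character (B i) \<psi>"
    "is_star_hom Dn (path_alg (B i)) (\<sigma> i)" "\<psi> (\<sigma> i ramp 0) = 0" "\<psi> (\<sigma> i ramp 1) = 1"
proof -
  \<comment> \<open>any diagonal position will do\<close>
  define \<theta> where "\<theta> = corner_entry (undefined :: 'n \<times> 'n)"
  have \<theta>: "is_character DnDn \<theta>"
    unfolding \<theta>_def by (rule is_character_corner_entry)
  have \<theta>_ramp: "\<theta> (p0 ramp) = 0" "\<theta> (p1 ramp) = 1"
    by (simp_all add: \<theta>_def corner_entry_p0 corner_entry_p1 ramp_0 ramp_1 mat_def)
  have B: "banach_algebra (B i)" and q: "is_star_hom DnDn (B i) (q i)"
    and onto: "q i ` cs_carrier DnDn = cs_carrier (B i)" and \<sigma>: "is_star_hom Dn (path_alg (B i)) (\<sigma> i)"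
    and ends: "\<sigma> i ramp 0 = q i (p0 ramp)" "\<sigma> i ramp 1 = q i (p1 ramp)" if "i < m" for i
    using TC that ramp_in_Dn_set cstar_algebra_imp_banach_algebra by (auto simp: TC_data_def)
  have "\<theta> F = 0" if "F \<in> cs_carrier DnDn" "\<forall>i<m. q i F = cs_zero (B i)" for F
    using TC that by (auto simp: TC_data_def \<theta>_def corner_entry_def)
  then have "\<exists>i<m. \<forall>F\<in>cs_carrier DnDn. q i F = cs_zero (B i) \<longrightarrow> \<theta> F = 0"
    using p1_in_DnDn_set[OF ramp_in_Dn_set] \<theta>_ramp
    by (intro character_kernel_prime[OF _ _ cs_closed_DnDn \<theta>, where e = "p1 ramp"] B q) auto
  then obtain i where i: "i < m" and ker: "\<forall>F\<in>DnDn_set. q i F = cs_zero (B i) \<longrightarrow> \<theta> F = 0"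
    by auto
  obtain \<psi> where \<psi>: "is_character (B i) \<psi>" and \<psi>_q: "\<And>F. F \<in> DnDn_set \<Longrightarrow> \<psi> (q i F) = \<theta> F"
    using character_factors_through_surjection[OF B[OF i] q[OF i] onto[OF i] cs_closed_DnDn \<theta>] ker
    by auto
  have "\<psi> (\<sigma> i ramp 0) = 0" "\<psi> (\<sigma> i ramp 1) = 1"
    using ends[OF i] \<theta>_ramp \<psi>_q[OF p0_in_DnDn_set[OF ramp_in_Dn_set]]
      \<psi>_q[OF p1_in_DnDn_set[OF ramp_in_Dn_set]] by simp_all
  then show ?thesis using that i B[OF i] \<psi> \<sigma>[OF i] by blast
qed

theorem mainTheorem18:
  fixes m :: nat
    and B :: "nat \<Rightarrow> 'b cstar"
    and q :: "nat \<Rightarrow> (real \<times> real \<Rightarrow> complex^('n::finite\<times>'n)^('n\<times>'n)) \<Rightarrow> 'b"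
    and \<sigma> :: "nat \<Rightarrow> (real \<Rightarrow> complex^'n^'n) \<Rightarrow> real \<Rightarrow> 'b"
  assumes "CARD('n) > 1"
  shows "\<not> TC_data (Dn :: (real \<Rightarrow> complex^'n^'n) cstar) DnDn p0 p1 m B q \<sigma>"
proof
  assume "TC_data (Dn :: (real \<Rightarrow> complex^'n^'n) cstar) DnDn p0 p1 m B q \<sigma>"
  then obtain i \<psi> where "banach_algebra (B i)" "is_character (B i) \<psi>"
    "is_star_hom Dn (path_alg (B i)) (\<sigma> i)" "\<psi> (\<sigma> i ramp 0) = 0" "\<psi> (\<sigma> i ramp 1) = 1"
    by (rule TC_data_corner_character)
  with character_path_ramp_constant[OF assms] show False by fastforce
qed

end
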